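(* Consider the one-hidden-layer network with scalar input $u^{\mathrm{NN}}(x;\theta)=\frac{1}{\sqrt m}\sum_{i=1}^mW^1_i\sigma(W^0_ix)$, $x\in\mathbb{R}$, $\theta=(W^0,W^1)\in\mathbb{R}^m\times\mathbb{R}^m$, with initialization $\theta_0=(W^0(0),W^1(0))$ having i.i.d. entries of mean $0$, variance $1$ and finite moments of all orders. Let $T\subset\mathbb{R}$ be a convex compact set, $k\geq1$ an integer, and let $\sigma$ satisfy the activation assumption below for $k+2$. Then for any $\delta>0$ there exist functions $B(m)$ with $B(m)\to\infty$ as $m\to\infty$ and $\eta(\varepsilon)$ such that, with probability at least $1-\delta$ over the initialization, for every $\varepsilon>0$, $$\sup_{x\in T}\Big\|\nabla_\theta\frac{d^ku^{\mathrm{NN}}}{dx^k}(x;\theta)-\nabla_\theta\frac{d^ku^{\mathrm{NN}}}{dx^k}(x;\theta_0)\Big\|_2\leq\varepsilon$$ for all $W^0,W^1$ satisfying $\|W^0-W^0(0)\|_2,\|W^1-W^1(0)\|_2\leq B(m)\eta(\varepsilon)$.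
   Context: Activation assumption for an integer $k$: $\sigma\in C^k(\mathbb{R})$ and there are positive constants $l_1,\dots,l_k$ with $\sup_x|\sigma^{(j)}(x)|/(1+|x|^{l_j})<\infty$, $j=1,\dots,k$. *)

theory Defs
  imports "HOL-Probability.Probability"
begin

definition C_n :: "nat \<Rightarrow> (real \<Rightarrow> real) \<Rightarrow> bool" where
  "C_n n \<sigma> \<longleftrightarrow> (\<forall>j<n. \<forall>x. ((deriv ^^ j) \<sigma>) differentiable (at x))
                 \<and> continuous_on UNIV ((deriv ^^ n) \<sigma>)"

definition activation_assm :: "nat \<Rightarrow> (real \<Rightarrow> real) \<Rightarrow> bool" where
  "activation_assm n \<sigma> \<longleftrightarrow> C_n n \<sigma> \<and>
     (\<forall>j\<in>{1..n}. \<exists>l>0. \<exists>C. \<forall>x. \<bar>(deriv ^^ j) \<sigma> x\<bar> / (1 + \<bar>x\<bar> powr l) \<le> C)"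

definition nn :: "nat \<Rightarrow> (real \<Rightarrow> real) \<Rightarrow> (nat \<Rightarrow> real) \<Rightarrow> (nat \<Rightarrow> real) \<Rightarrow> real \<Rightarrow> real" where
  "nn m \<sigma> W0 W1 x = (\<Sum>i<m. W1 i * \<sigma> (W0 i * x)) / sqrt (real m)"

definition nn_dk :: "nat \<Rightarrow> (real \<Rightarrow> real) \<Rightarrow> nat \<Rightarrow> (nat \<Rightarrow> real) \<Rightarrow> (nat \<Rightarrow> real) \<Rightarrow> real \<Rightarrow> real" where
  "nn_dk m \<sigma> k W0 W1 x = (deriv ^^ k) (nn m \<sigma> W0 W1) x"

definition pd0 :: "nat \<Rightarrow> (real \<Rightarrow> real) \<Rightarrow> nat \<Rightarrow> (nat \<Rightarrow> real) \<Rightarrow> (nat \<Rightarrow> real) \<Rightarrow> real \<Rightarrow> nat \<Rightarrow> real" where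
  "pd0 m \<sigma> k W0 W1 x i = deriv (\<lambda>t. nn_dk m \<sigma> k (W0(i := t)) W1 x) (W0 i)"

definition pd1 :: "nat \<Rightarrow> (real \<Rightarrow> real) \<Rightarrow> nat \<Rightarrow> (nat \<Rightarrow> real) \<Rightarrow> (nat \<Rightarrow> real) \<Rightarrow> real \<Rightarrow> nat \<Rightarrow> real" where
  "pd1 m \<sigma> k W0 W1 x i = deriv (\<lambda>t. nn_dk m \<sigma> k W0 (W1(i := t)) x) (W1 i)"

definition grad_dist :: "nat \<Rightarrow> (real \<Rightarrow> real) \<Rightarrow> nat \<Rightarrow> (nat \<Rightarrow> real) \<Rightarrow> (nat \<Rightarrow> real)
    \<Rightarrow> (nat \<Rightarrow> real) \<Rightarrow> (nat \<Rightarrow> real) \<Rightarrow> real \<Rightarrow> real" where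
  "grad_dist m \<sigma> k W0 W1 V0 V1 x = sqrt (\<Sum>i<m.
      (pd0 m \<sigma> k W0 W1 x i - pd0 m \<sigma> k V0 V1 x i)\<^sup>2 + (pd1 m \<sigma> k W0 W1 x i - pd1 m \<sigma> k V0 V1 x i)\<^sup>2)"

definition l2dist :: "nat \<Rightarrow> (nat \<Rightarrow> real) \<Rightarrow> (nat \<Rightarrow> real) \<Rightarrow> real" where
  "l2dist m a b = sqrt (\<Sum>i<m. (a i - b i)\<^sup>2)"

end

theory Submission
  imports Defs "HOL-Real_Asymp.Real_Asymp"
begin

text \<open>
  The entries of the parameter gradient of the k-th x-derivative are explicit: the W1_i-entry is
  W0_i^k sigma^(k)(W0_i x)/sqrt m and the W0_i-entry is W1_i times the w-derivative of
  w^k sigma^(k)(w x) at W0_i, divided by sqrt m. Polynomial growth of sigma^(k), sigma^(k+1),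
  sigma^(k+2) makes both Lipschitz in (W0_i, W1_i) on [-U, U] with constant O(U^D), so moving the
  weights by R in l2 from an initialization bounded by K changes the gradient by at most
  G (1 + K + R)^D R / sqrt m. Markov's inequality for the p-th moment, p = 2 (D + 1), and a union
  bound over the 2m initial weights bound them all by c (m + 1)^(1/p) with probability at least
  1 - delta; with B(m) = (m + 1)^(1/p) the factor B(m)^(D+1) / sqrt m stays bounded, which fixes eta.
\<close>

section \<open>Derivatives of the network\<close>

lemma C_n_deriv_iter_has_real_derivative:
  assumes "C_n n \<sigma>" "j < n"
  shows "((deriv ^^ j) \<sigma> has_real_derivative (deriv ^^ Suc j) \<sigma> y) (at y)"
  using assms unfolding C_n_def by (simp add: DERIV_deriv_iff_real_differentiable)

lemma has_real_derivative_power_mult_dilate: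
  assumes "\<And>y. (g has_real_derivative g' y) (at y)"
  shows "((\<lambda>w. w ^ a * g (w * x)) has_real_derivative
           real a * w ^ (a - 1) * g (w * x) + w ^ a * x * g' (w * x)) (at w)"
proof -
  have "((\<lambda>w. g (w * x)) has_real_derivative g' (w * x) * x) (at w)"
    by (rule DERIV_chain2[OF assms]) (auto intro!: derivative_eq_intros)
  from DERIV_mult'[OF DERIV_pow this] show ?thesis
    by (simp add: algebra_simps)
qed

lemma has_real_derivative_sum_fun_upd:
  fixes h :: "nat \<Rightarrow> real \<Rightarrow> real"
  assumes "i < m" "(h i has_real_derivative D) (at (F i))"
  shows "((\<lambda>t. \<Sum>l<m. h l ((F(i := t)) l)) has_real_derivative D) (at (F i))"
proof -
  have "(\<Sum>l<m. h l ((F(i := t)) l)) = h i t + (\<Sum>l\<in>{..<m} - {i}. h l (F l))" for t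
    using assms(1) by (simp add: sum.remove[of _ i])
  then show ?thesis
    using assms(2) by (auto intro!: derivative_eq_intros)
qed

text \<open>
  \<open>neuron_dk \<sigma> k x w\<close> is the k-th x-derivative of \<open>\<sigma> (w * x)\<close>; \<open>neuron_dk_dw\<close> and
  \<open>neuron_dk_dw2\<close> are its first and second derivatives in w.
\<close>

definition neuron_dk :: "(real \<Rightarrow> real) \<Rightarrow> nat \<Rightarrow> real \<Rightarrow> real \<Rightarrow> real" where
  "neuron_dk \<sigma> k x w = w ^ k * (deriv ^^ k) \<sigma> (w * x)"

definition neuron_dk_dw :: "(real \<Rightarrow> real) \<Rightarrow> nat \<Rightarrow> real \<Rightarrow> real \<Rightarrow> real" where
  "neuron_dk_dw \<sigma> k x w = real k * w ^ (k - 1) * (deriv ^^ k) \<sigma> (w * x)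
                          + w ^ k * x * (deriv ^^ Suc k) \<sigma> (w * x)"

definition neuron_dk_dw2 :: "(real \<Rightarrow> real) \<Rightarrow> nat \<Rightarrow> real \<Rightarrow> real \<Rightarrow> real" where
  "neuron_dk_dw2 \<sigma> k x w =
     real k * (real (k - 1) * w ^ (k - 1 - 1) * (deriv ^^ k) \<sigma> (w * x)
               + w ^ (k - 1) * x * (deriv ^^ Suc k) \<sigma> (w * x))
     + x * (real k * w ^ (k - 1) * (deriv ^^ Suc k) \<sigma> (w * x)
            + w ^ k * x * (deriv ^^ Suc (Suc k)) \<sigma> (w * x))"

lemma neuron_dk_has_real_derivative_x:
  assumes "C_n n \<sigma>" "k < n"
  shows "((\<lambda>x. neuron_dk \<sigma> k x w) has_real_derivative neuron_dk \<sigma> (Suc k) x w) (at x)"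
proof -
  have "((\<lambda>x. (deriv ^^ k) \<sigma> (w * x)) has_real_derivative (deriv ^^ Suc k) \<sigma> (w * x) * w) (at x)"
    by (rule DERIV_chain2[OF C_n_deriv_iter_has_real_derivative[OF assms]])
       (auto intro!: derivative_eq_intros)
  from DERIV_cmult[OF this, of "w ^ k"] show ?thesis
    unfolding neuron_dk_def by (simp add: algebra_simps)
qed

lemma neuron_dk_has_real_derivative_w:
  assumes "C_n n \<sigma>" "k < n"
  shows "(neuron_dk \<sigma> k x has_real_derivative neuron_dk_dw \<sigma> k x w) (at w)"
  unfolding neuron_dk_def[abs_def] neuron_dk_dw_def
  by (rule has_real_derivative_power_mult_dilate C_n_deriv_iter_has_real_derivative assms)+

lemma neuron_dk_dw_has_real_derivative_w:
  assumes "C_n n \<sigma>" "Suc k < n"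
  shows "(neuron_dk_dw \<sigma> k x has_real_derivative neuron_dk_dw2 \<sigma> k x w) (at w)"
proof -
  have power_dilate: "((\<lambda>w. w ^ a * (deriv ^^ j) \<sigma> (w * x)) has_real_derivative
      real a * w ^ (a - 1) * (deriv ^^ j) \<sigma> (w * x) + w ^ a * x * (deriv ^^ Suc j) \<sigma> (w * x)) (at w)"
    if "j \<le> Suc k" for a j
    using assms that
    by (intro has_real_derivative_power_mult_dilate C_n_deriv_iter_has_real_derivative) auto
  have "neuron_dk_dw \<sigma> k x = (\<lambda>w. real k * (w ^ (k - 1) * (deriv ^^ k) \<sigma> (w * x))
                                + x * (w ^ k * (deriv ^^ Suc k) \<sigma> (w * x)))"
    by (auto simp: neuron_dk_dw_def algebra_simps)
  then show ?thesis
    unfolding neuron_dk_dw2_def by (simp only:) (intro DERIV_add DERIV_cmult power_dilate; simp)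
qed

lemma deriv_iter_nn:
  assumes "C_n n \<sigma>" "j \<le> n"
  shows "(deriv ^^ j) (nn m \<sigma> W0 W1) = (\<lambda>x. (\<Sum>l<m. W1 l * neuron_dk \<sigma> j x (W0 l)) / sqrt (real m))"
  using assms(2)
proof (induction j)
  case 0
  show ?case by (simp add: nn_def neuron_dk_def)
next
  case (Suc j)
  have "((\<lambda>x. (\<Sum>l<m. W1 l * neuron_dk \<sigma> j x (W0 l)) / sqrt (real m)) has_real_derivative
          (\<Sum>l<m. W1 l * neuron_dk \<sigma> (Suc j) x (W0 l)) / sqrt (real m)) (at x)" for x
    using Suc.prems
    by (intro DERIV_cdivide DERIV_sum DERIV_cmult neuron_dk_has_real_derivative_x[OF assms(1)]) auto
  then show ?case
    using Suc by (auto intro!: DERIV_imp_deriv)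
qed

lemma pd1_eq:
  assumes "C_n n \<sigma>" "k \<le> n" "i < m"
  shows "pd1 m \<sigma> k W0 W1 x i = neuron_dk \<sigma> k x (W0 i) / sqrt (real m)"
proof -
  let ?h = "\<lambda>l v. v * neuron_dk \<sigma> k x (W0 l) / sqrt (real m)"
  have "(?h i has_real_derivative neuron_dk \<sigma> k x (W0 i) / sqrt (real m)) (at (W1 i))"
    by (intro DERIV_cdivide) (auto intro!: derivative_eq_intros)
  from has_real_derivative_sum_fun_upd[where F = W1 and h = ?h, OF assms(3) this]
  have "((\<lambda>t. nn_dk m \<sigma> k W0 (W1(i := t)) x) has_real_derivative
          neuron_dk \<sigma> k x (W0 i) / sqrt (real m)) (at (W1 i))"
    using assms(1,2) by (simp add: nn_dk_def deriv_iter_nn sum_divide_distrib)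
  then show ?thesis
    unfolding pd1_def by (rule DERIV_imp_deriv)
qed

lemma pd0_eq:
  assumes "C_n n \<sigma>" "k < n" "i < m"
  shows "pd0 m \<sigma> k W0 W1 x i = W1 i * neuron_dk_dw \<sigma> k x (W0 i) / sqrt (real m)"
proof -
  let ?h = "\<lambda>l w. W1 l * neuron_dk \<sigma> k x w / sqrt (real m)"
  have "(?h i has_real_derivative W1 i * neuron_dk_dw \<sigma> k x (W0 i) / sqrt (real m)) (at (W0 i))"
    using assms by (intro DERIV_cdivide DERIV_cmult neuron_dk_has_real_derivative_w)
  from has_real_derivative_sum_fun_upd[where F = W0 and h = ?h, OF assms(3) this]
  have "((\<lambda>t. nn_dk m \<sigma> k (W0(i := t)) W1 x) has_real_derivative
          W1 i * neuron_dk_dw \<sigma> k x (W0 i) / sqrt (real m)) (at (W0 i))"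
    using assms(1,2) by (simp add: nn_dk_def deriv_iter_nn sum_divide_distrib)
  then show ?thesis
    unfolding pd0_def by (rule DERIV_imp_deriv)
qed

section \<open>Local Lipschitz bound on the gradient\<close>

lemma powr_growth_imp_power_growth:
  fixes f :: "real \<Rightarrow> real"
  assumes "\<exists>l>0. \<exists>C. \<forall>x. \<bar>f x\<bar> / (1 + \<bar>x\<bar> powr l) \<le> C"
  shows "\<exists>C N. C \<ge> 0 \<and> (\<forall>y. \<bar>f y\<bar> \<le> C * (1 + \<bar>y\<bar>) ^ N)"
proof -
  obtain l C where "l > 0" and C: "\<And>x. \<bar>f x\<bar> / (1 + \<bar>x\<bar> powr l) \<le> C"
    using assms by blast
  have "C \<ge> 0"
    using C[of 0] by (smt (verit) divide_nonneg_nonneg powr_ge_zero)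
  have "\<bar>f y\<bar> \<le> 2 * C * (1 + \<bar>y\<bar>) ^ nat \<lceil>l\<rceil>" for y
  proof -
    have "\<bar>f y\<bar> \<le> C * (1 + \<bar>y\<bar> powr l)"
      using C[of y] by (simp add: divide_le_eq add_pos_nonneg)
    also have "\<bar>y\<bar> powr l \<le> (1 + \<bar>y\<bar>) powr real (nat \<lceil>l\<rceil>)"
      using \<open>l > 0\<close> by (intro order_trans[OF powr_mono2 powr_mono]) auto
    also have "(1 + \<bar>y\<bar>) powr real (nat \<lceil>l\<rceil>) = (1 + \<bar>y\<bar>) ^ nat \<lceil>l\<rceil>"
      by (simp add: powr_realpow)
    also have "C * (1 + (1 + \<bar>y\<bar>) ^ nat \<lceil>l\<rceil>) \<le> C * (2 * (1 + \<bar>y\<bar>) ^ nat \<lceil>l\<rceil>)"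
      using \<open>C \<ge> 0\<close> by (intro mult_left_mono) auto
    finally show ?thesis
      using \<open>C \<ge> 0\<close> by (simp add: mult_left_mono)
  qed
  then show ?thesis
    using \<open>C \<ge> 0\<close> by (intro exI[of _ "2 * C"] exI[of _ "nat \<lceil>l\<rceil>"]) auto
qed

lemma activation_assm_uniform_growth:
  assumes "activation_assm n \<sigma>" "finite J" "J \<subseteq> {1..n}"
  shows "\<exists>C N. C \<ge> 0 \<and> (\<forall>j\<in>J. \<forall>y. \<bar>(deriv ^^ j) \<sigma> y\<bar> \<le> C * (1 + \<bar>y\<bar>) ^ N)"
  using assms(2,3)
proof (induction J rule: finite_induct)
  case empty
  show ?case by auto
next
  case (insert j J)
  obtain C N where "C \<ge> 0" and C: "\<forall>i\<in>J. \<forall>y. \<bar>(deriv ^^ i) \<sigma> y\<bar> \<le> C * (1 + \<bar>y\<bar>) ^ N"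
    using insert by auto
  have "j \<in> {1..n}"
    using insert.prems by simp
  then have "\<exists>l>0. \<exists>C. \<forall>x. \<bar>(deriv ^^ j) \<sigma> x\<bar> / (1 + \<bar>x\<bar> powr l) \<le> C"
    using assms(1) unfolding activation_assm_def by blast
  then obtain C' N' where "C' \<ge> 0" and C': "\<forall>y. \<bar>(deriv ^^ j) \<sigma> y\<bar> \<le> C' * (1 + \<bar>y\<bar>) ^ N'"
    using powr_growth_imp_power_growth by blast
  have "\<bar>(deriv ^^ i) \<sigma> y\<bar> \<le> (C + C') * (1 + \<bar>y\<bar>) ^ max N N'" if "i \<in> insert j J" for i y
  proof -
    have "C * (1 + \<bar>y\<bar>) ^ N \<le> (C + C') * (1 + \<bar>y\<bar>) ^ max N N'"
      "C' * (1 + \<bar>y\<bar>) ^ N' \<le> (C + C') * (1 + \<bar>y\<bar>) ^ max N N'"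
      using \<open>C \<ge> 0\<close> \<open>C' \<ge> 0\<close> by (auto intro!: mult_mono power_increasing)
    then show ?thesis
      using that C C' by (auto intro: order_trans)
  qed
  then show ?case
    using \<open>C \<ge> 0\<close> \<open>C' \<ge> 0\<close> by (intro exI[of _ "C + C'"] exI[of _ "max N N'"]) auto
qed

lemma abs_power_le_power:
  fixes w :: real
  assumes "\<bar>w\<bar> \<le> U" "1 \<le> U" "a \<le> k"
  shows "\<bar>w ^ a\<bar> \<le> U ^ k"
proof -
  have "\<bar>w ^ a\<bar> \<le> U ^ a"
    unfolding power_abs using assms(1) by (intro power_mono) auto
  also have "\<dots> \<le> U ^ k"
    using assms(2,3) by (rule power_increasing[rotated])
  finally show ?thesis .
qed

lemma abs_deriv_iter_dilate_le:
  fixes \<sigma> :: "real \<Rightarrow> real"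
  assumes growth: "\<And>y. \<bar>(deriv ^^ j) \<sigma> y\<bar> \<le> C * (1 + \<bar>y\<bar>) ^ N" and "C \<ge> 0"
    and "\<bar>x\<bar> \<le> \<tau>" "1 \<le> \<tau>" "\<bar>w\<bar> \<le> U" "1 \<le> U"
  shows "\<bar>(deriv ^^ j) \<sigma> (w * x)\<bar> \<le> C * (2 * \<tau>) ^ N * U ^ N"
proof -
  have "\<bar>w * x\<bar> \<le> U * \<tau>"
    unfolding abs_mult by (rule mult_mono') (use assms in auto)
  moreover have "1 \<le> U * \<tau>"
    using assms by (metis mult_mono' mult_1 zero_le_one)
  ultimately have "1 + \<bar>w * x\<bar> \<le> 2 * \<tau> * U"
    by (simp add: algebra_simps)
  then have "C * (1 + \<bar>w * x\<bar>) ^ N \<le> C * (2 * \<tau> * U) ^ N"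
    using \<open>C \<ge> 0\<close> by (intro mult_left_mono power_mono) auto
  then show ?thesis
    using growth[of "w * x"] by (simp add: power_mult_distrib mult.assoc)
qed

lemma abs_neuron_dk_dw_le:
  assumes growth: "\<And>j y. j \<in> {k..k+2} \<Longrightarrow> \<bar>(deriv ^^ j) \<sigma> y\<bar> \<le> C * (1 + \<bar>y\<bar>) ^ N"
    and "C \<ge> 0" "\<bar>x\<bar> \<le> \<tau>" "1 \<le> \<tau>" "\<bar>w\<bar> \<le> U" "1 \<le> U"
  shows "\<bar>neuron_dk_dw \<sigma> k x w\<bar> \<le> (real k + \<tau>)\<^sup>2 * C * (2 * \<tau>) ^ N * U ^ (k + N)"
    and "\<bar>neuron_dk_dw2 \<sigma> k x w\<bar> \<le> (real k + \<tau>)\<^sup>2 * C * (2 * \<tau>) ^ N * U ^ (k + N)"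
proof -
  define S where "S = C * (2 * \<tau>) ^ N * U ^ N"
  have S: "\<bar>(deriv ^^ j) \<sigma> (w * x)\<bar> \<le> S" if "j \<in> {k..k+2}" for j
    unfolding S_def using assms that by (intro abs_deriv_iter_dilate_le) auto
  have W: "\<bar>w ^ a\<bar> \<le> U ^ k" if "a \<le> k" for a
    using assms that by (intro abs_power_le_power)
  note bounds = S W \<open>\<bar>x\<bar> \<le> \<tau>\<close>
  have "S \<ge> 0" "real k + \<tau> \<ge> 1"
    unfolding S_def using assms by auto
  have rhs: "(real k + \<tau>)\<^sup>2 * C * (2 * \<tau>) ^ N * U ^ (k + N) = (real k + \<tau>)\<^sup>2 * U ^ k * S"
    unfolding S_def by (simp add: power_add)
  have "\<bar>neuron_dk_dw \<sigma> k x w\<bar> \<le> real k * U ^ k * S + U ^ k * \<tau> * S"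
    unfolding neuron_dk_dw_def using \<open>1 \<le> U\<close> \<open>1 \<le> \<tau>\<close>
    by (intro order_trans[OF abs_triangle_ineq add_mono])
       (auto simp: abs_mult simp del: funpow.simps intro!: mult_mono bounds)
  also have "\<dots> = (real k + \<tau>) * U ^ k * S"
    by (simp add: algebra_simps)
  also have "\<dots> \<le> (real k + \<tau>)\<^sup>2 * U ^ k * S"
    using \<open>S \<ge> 0\<close> \<open>real k + \<tau> \<ge> 1\<close> \<open>1 \<le> U\<close>
    by (intro mult_right_mono) (auto simp: power2_eq_square)
  finally show "\<bar>neuron_dk_dw \<sigma> k x w\<bar> \<le> (real k + \<tau>)\<^sup>2 * C * (2 * \<tau>) ^ N * U ^ (k + N)"
    unfolding rhs .
  have "\<bar>neuron_dk_dw2 \<sigma> k x w\<bar>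
      \<le> real k * (real k * U ^ k * S + U ^ k * \<tau> * S) + \<tau> * (real k * U ^ k * S + U ^ k * \<tau> * S)"
    unfolding neuron_dk_dw2_def using \<open>1 \<le> U\<close> \<open>1 \<le> \<tau>\<close>
    by (intro order_trans[OF abs_triangle_ineq add_mono])
       (auto simp: abs_mult simp del: funpow.simps
             intro!: mult_mono bounds order_trans[OF abs_triangle_ineq add_mono])
  also have "\<dots> = (real k + \<tau>)\<^sup>2 * U ^ k * S"
    by (simp add: algebra_simps power2_eq_square)
  finally show "\<bar>neuron_dk_dw2 \<sigma> k x w\<bar> \<le> (real k + \<tau>)\<^sup>2 * C * (2 * \<tau>) ^ N * U ^ (k + N)"
    unfolding rhs .
qed

lemma abs_diff_le_of_deriv_bound:
  fixes f f' :: "real \<Rightarrow> real"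
  assumes "\<And>y. \<bar>y\<bar> \<le> U \<Longrightarrow> (f has_real_derivative f' y) (at y)"
    and "\<And>y. \<bar>y\<bar> \<le> U \<Longrightarrow> \<bar>f' y\<bar> \<le> B"
    and "\<bar>w\<bar> \<le> U" "\<bar>w'\<bar> \<le> U"
  shows "\<bar>f w - f w'\<bar> \<le> B * \<bar>w - w'\<bar>"
  using field_differentiable_bound[of "{-U..U}" f f' B w w'] assms
  by (auto simp: abs_le_iff has_field_derivative_at_within)

lemma neuron_dk_lipschitz:
  fixes \<sigma> :: "real \<Rightarrow> real"
  assumes "C_n n \<sigma>" "k + 2 \<le> n"
    and growth: "\<And>j y. j \<in> {k..k+2} \<Longrightarrow> \<bar>(deriv ^^ j) \<sigma> y\<bar> \<le> C * (1 + \<bar>y\<bar>) ^ N"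
    and "C \<ge> 0" "\<bar>x\<bar> \<le> \<tau>" "1 \<le> \<tau>" "1 \<le> U"
    and "\<bar>w\<bar> \<le> U" "\<bar>w'\<bar> \<le> U" "\<bar>v\<bar> \<le> U" "\<bar>v'\<bar> \<le> U"
  shows "\<bar>neuron_dk \<sigma> k x w - neuron_dk \<sigma> k x w'\<bar>
           \<le> (real k + \<tau>)\<^sup>2 * C * (2 * \<tau>) ^ N * U ^ (k + N + 1) * (\<bar>w - w'\<bar> + \<bar>v - v'\<bar>)"
    and "\<bar>v * neuron_dk_dw \<sigma> k x w - v' * neuron_dk_dw \<sigma> k x w'\<bar>
           \<le> (real k + \<tau>)\<^sup>2 * C * (2 * \<tau>) ^ N * U ^ (k + N + 1) * (\<bar>w - w'\<bar> + \<bar>v - v'\<bar>)"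
proof -
  define L where "L = (real k + \<tau>)\<^sup>2 * C * (2 * \<tau>) ^ N * U ^ (k + N)"
  have "L \<ge> 0"
    unfolding L_def using assms by simp
  have LU: "(real k + \<tau>)\<^sup>2 * C * (2 * \<tau>) ^ N * U ^ (k + N + 1) = L * U"
    unfolding L_def by simp
  have bounds: "\<bar>neuron_dk_dw \<sigma> k x y\<bar> \<le> L" "\<bar>neuron_dk_dw2 \<sigma> k x y\<bar> \<le> L" if "\<bar>y\<bar> \<le> U" for y
    unfolding L_def using assms that by (intro abs_neuron_dk_dw_le; simp)+
  have dk: "\<bar>neuron_dk \<sigma> k x w - neuron_dk \<sigma> k x w'\<bar> \<le> L * \<bar>w - w'\<bar>"
    by (rule abs_diff_le_of_deriv_bound[OF neuron_dk_has_real_derivative_w[OF assms(1)] bounds(1)])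
       (use assms in auto)
  have dw: "\<bar>neuron_dk_dw \<sigma> k x w - neuron_dk_dw \<sigma> k x w'\<bar> \<le> L * \<bar>w - w'\<bar>"
    by (rule abs_diff_le_of_deriv_bound[OF neuron_dk_dw_has_real_derivative_w[OF assms(1)] bounds(2)])
       (use assms in auto)
  have "L \<le> L * U"
    using \<open>L \<ge> 0\<close> \<open>1 \<le> U\<close> mult_left_mono[of 1 U L] by simp
  then have "L * \<bar>w - w'\<bar> \<le> L * U * (\<bar>w - w'\<bar> + \<bar>v - v'\<bar>)"
    using \<open>L \<ge> 0\<close> by (intro mult_mono) auto
  with dk show "\<bar>neuron_dk \<sigma> k x w - neuron_dk \<sigma> k x w'\<bar>
           \<le> (real k + \<tau>)\<^sup>2 * C * (2 * \<tau>) ^ N * U ^ (k + N + 1) * (\<bar>w - w'\<bar> + \<bar>v - v'\<bar>)"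
    unfolding LU by linarith
  have "\<bar>v * neuron_dk_dw \<sigma> k x w - v' * neuron_dk_dw \<sigma> k x w'\<bar>
      = \<bar>(v - v') * neuron_dk_dw \<sigma> k x w + v' * (neuron_dk_dw \<sigma> k x w - neuron_dk_dw \<sigma> k x w')\<bar>"
    by (simp add: algebra_simps)
  also have "\<dots> \<le> \<bar>v - v'\<bar> * L + U * (L * \<bar>w - w'\<bar>)"
    using assms bounds dw
    by (intro order_trans[OF abs_triangle_ineq add_mono]) (auto simp: abs_mult intro!: mult_mono)
  also have "\<dots> \<le> L * U * (\<bar>w - w'\<bar> + \<bar>v - v'\<bar>)"
    using \<open>L \<ge> 0\<close> \<open>1 \<le> U\<close> mult_left_mono[of 1 U "\<bar>v - v'\<bar> * L"]
    by (simp add: algebra_simps)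
  finally show "\<bar>v * neuron_dk_dw \<sigma> k x w - v' * neuron_dk_dw \<sigma> k x w'\<bar>
           \<le> (real k + \<tau>)\<^sup>2 * C * (2 * \<tau>) ^ N * U ^ (k + N + 1) * (\<bar>w - w'\<bar> + \<bar>v - v'\<bar>)"
    unfolding LU .
qed

lemma sqrt_sum_pairs_le:
  fixes f g a b :: "nat \<Rightarrow> real"
  assumes "\<And>i. i < m \<Longrightarrow> \<bar>f i\<bar> \<le> L * (\<bar>a i\<bar> + \<bar>b i\<bar>)"
    and "\<And>i. i < m \<Longrightarrow> \<bar>g i\<bar> \<le> L * (\<bar>a i\<bar> + \<bar>b i\<bar>)"
    and "L \<ge> 0" "sqrt (\<Sum>i<m. (a i)\<^sup>2) \<le> R" "sqrt (\<Sum>i<m. (b i)\<^sup>2) \<le> R"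
  shows "sqrt (\<Sum>i<m. (f i)\<^sup>2 + (g i)\<^sup>2) \<le> sqrt 8 * L * R"
proof -
  have "R \<ge> 0"
    using assms(4) by (meson order_trans real_sqrt_ge_zero sum_nonneg zero_le_power2)
  have "(f i)\<^sup>2 + (g i)\<^sup>2 \<le> 4 * L\<^sup>2 * ((a i)\<^sup>2 + (b i)\<^sup>2)" if "i < m" for i
  proof -
    have "(f i)\<^sup>2 \<le> (L * (\<bar>a i\<bar> + \<bar>b i\<bar>))\<^sup>2" "(g i)\<^sup>2 \<le> (L * (\<bar>a i\<bar> + \<bar>b i\<bar>))\<^sup>2"
      using assms(1,2)[OF that] by (metis abs_ge_zero power2_abs power_mono)+
    moreover have "(\<bar>a i\<bar> + \<bar>b i\<bar>)\<^sup>2 \<le> 2 * ((a i)\<^sup>2 + (b i)\<^sup>2)"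
      using sum_squares_ge_zero[of "\<bar>a i\<bar> - \<bar>b i\<bar>" 0] by (simp add: power2_eq_square algebra_simps)
    then have "(L * (\<bar>a i\<bar> + \<bar>b i\<bar>))\<^sup>2 \<le> L\<^sup>2 * (2 * ((a i)\<^sup>2 + (b i)\<^sup>2))"
      unfolding power_mult_distrib by (rule mult_left_mono) simp
    ultimately show ?thesis
      by linarith
  qed
  then have "(\<Sum>i<m. (f i)\<^sup>2 + (g i)\<^sup>2) \<le> 4 * L\<^sup>2 * ((\<Sum>i<m. (a i)\<^sup>2) + (\<Sum>i<m. (b i)\<^sup>2))"
    by (auto intro!: sum_mono simp: sum_distrib_left sum.distrib distrib_left simp flip: sum.distrib)
  also have "\<dots> \<le> 4 * L\<^sup>2 * (R\<^sup>2 + R\<^sup>2)"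
    using assms(4,5) by (intro mult_left_mono add_mono sqrt_le_D) auto
  also have "\<dots> = (sqrt 8 * L * R)\<^sup>2"
    by (simp add: power_mult_distrib)
  finally show ?thesis
    using \<open>L \<ge> 0\<close> \<open>R \<ge> 0\<close> by (simp add: real_le_lsqrt)
qed

lemma abs_le_l2dist:
  assumes "i < m"
  shows "\<bar>a i - b i\<bar> \<le> l2dist m a b"
proof -
  have "(a i - b i)\<^sup>2 \<le> (\<Sum>j<m. (a j - b j)\<^sup>2)"
    using assms by (intro member_le_sum) auto
  then show ?thesis
    unfolding l2dist_def by (metis real_sqrt_abs real_sqrt_le_mono)
qed

lemma grad_dist_le:
  fixes \<sigma> :: "real \<Rightarrow> real"
  assumes "C_n n \<sigma>" "k + 2 \<le> n"
    and growth: "\<And>j y. j \<in> {k..k+2} \<Longrightarrow> \<bar>(deriv ^^ j) \<sigma> y\<bar> \<le> C * (1 + \<bar>y\<bar>) ^ N"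
    and "C \<ge> 0" "\<bar>x\<bar> \<le> \<tau>" "1 \<le> \<tau>" "K \<ge> 0" "R \<ge> 0"
    and V: "\<And>i. i < m \<Longrightarrow> \<bar>V0 i\<bar> \<le> K \<and> \<bar>V1 i\<bar> \<le> K"
    and W: "l2dist m W0 V0 \<le> R" "l2dist m W1 V1 \<le> R"
  shows "grad_dist m \<sigma> k W0 W1 V0 V1 x
           \<le> sqrt 8 * ((real k + \<tau>)\<^sup>2 * C * (2 * \<tau>) ^ N) * (1 + K + R) ^ (k + N + 1) * R / sqrt (real m)"
proof -
  define L where "L = (real k + \<tau>)\<^sup>2 * C * (2 * \<tau>) ^ N * (1 + K + R) ^ (k + N + 1) / sqrt (real m)"
  have "L \<ge> 0"
    unfolding L_def using assms by simp
  have "\<bar>pd0 m \<sigma> k W0 W1 x i - pd0 m \<sigma> k V0 V1 x i\<bar> \<le> L * (\<bar>W0 i - V0 i\<bar> + \<bar>W1 i - V1 i\<bar>)"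
    and "\<bar>pd1 m \<sigma> k W0 W1 x i - pd1 m \<sigma> k V0 V1 x i\<bar> \<le> L * (\<bar>W0 i - V0 i\<bar> + \<bar>W1 i - V1 i\<bar>)"
    if "i < m" for i
  proof -
    have "\<bar>W0 i - V0 i\<bar> \<le> R" "\<bar>W1 i - V1 i\<bar> \<le> R"
      using abs_le_l2dist[OF that] W by (blast intro: order_trans)+
    then have U: "\<bar>W0 i\<bar> \<le> 1 + K + R" "\<bar>V0 i\<bar> \<le> 1 + K + R" "\<bar>W1 i\<bar> \<le> 1 + K + R" "\<bar>V1 i\<bar> \<le> 1 + K + R"
      using V[OF that] by auto
    note lip = neuron_dk_lipschitz[OF assms(1,2) growth \<open>C \<ge> 0\<close> \<open>\<bar>x\<bar> \<le> \<tau>\<close> \<open>1 \<le> \<tau>\<close> _ U]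
    show "\<bar>pd0 m \<sigma> k W0 W1 x i - pd0 m \<sigma> k V0 V1 x i\<bar> \<le> L * (\<bar>W0 i - V0 i\<bar> + \<bar>W1 i - V1 i\<bar>)"
      using assms that lip(2)
      by (simp add: pd0_eq L_def diff_divide_distrib[symmetric] divide_right_mono)
    show "\<bar>pd1 m \<sigma> k W0 W1 x i - pd1 m \<sigma> k V0 V1 x i\<bar> \<le> L * (\<bar>W0 i - V0 i\<bar> + \<bar>W1 i - V1 i\<bar>)"
      using assms that lip(1)
      by (simp add: pd1_eq L_def diff_divide_distrib[symmetric] divide_right_mono)
  qed
  then have "grad_dist m \<sigma> k W0 W1 V0 V1 x \<le> sqrt 8 * L * R"
    unfolding grad_dist_def using \<open>L \<ge> 0\<close> W unfolding l2dist_def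
    by (intro sqrt_sum_pairs_le[where a = "\<lambda>i. W0 i - V0 i" and b = "\<lambda>i. W1 i - V1 i"]) auto
  then show ?thesis
    unfolding L_def by simp
qed

lemma activation_grad_dist_bound:
  assumes "activation_assm (k + 2) \<sigma>" "1 \<le> k" "bounded T"
  shows "\<exists>G D. G \<ge> 0 \<and> (\<forall>m K R V0 V1 W0 W1 x. K \<ge> 0 \<longrightarrow> R \<ge> 0 \<longrightarrow>
           (\<forall>i<m. \<bar>V0 i\<bar> \<le> K \<and> \<bar>V1 i\<bar> \<le> K) \<longrightarrow>
           l2dist m W0 V0 \<le> R \<longrightarrow> l2dist m W1 V1 \<le> R \<longrightarrow> x \<in> T \<longrightarrow>
           grad_dist m \<sigma> k W0 W1 V0 V1 x \<le> G * (1 + K + R) ^ D * R / sqrt (real m))"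
proof -
  obtain C N where "C \<ge> 0" and growth: "\<forall>j\<in>{k..k+2}. \<forall>y. \<bar>(deriv ^^ j) \<sigma> y\<bar> \<le> C * (1 + \<bar>y\<bar>) ^ N"
    using activation_assm_uniform_growth[OF assms(1), of "{k..k+2}"] assms(2) by auto
  obtain \<tau>0 where \<tau>0: "\<forall>x\<in>T. \<bar>x\<bar> \<le> \<tau>0"
    using assms(3) unfolding bounded_real by blast
  define \<tau> where "\<tau> = max 1 \<tau>0"
  have "C_n (k + 2) \<sigma>"
    using assms(1) unfolding activation_assm_def by blast
  then show ?thesis
    using growth \<open>C \<ge> 0\<close> \<tau>0 grad_dist_le[where \<tau> = \<tau>]
    by (intro exI[of _ "sqrt 8 * ((real k + \<tau>)\<^sup>2 * C * (2 * \<tau>) ^ N)"] exI[of _ "k + N + 1"])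
       (auto simp: \<tau>_def)
qed

section \<open>Bounded initialization with high probability\<close>

lemma measure_abs_gt_le_moment:
  assumes "prob_space M" and X: "X \<in> borel_measurable M" and Y: "Y \<in> borel_measurable M"
    and "distr M borel X = distr M borel Y"
    and "integrable M (\<lambda>\<omega>. \<bar>Y \<omega>\<bar> ^ p)" "(\<kappa>::real) > 0"
  shows "measure M {\<omega>\<in>space M. \<kappa> < \<bar>X \<omega>\<bar>} \<le> (\<integral>\<omega>. \<bar>Y \<omega>\<bar> ^ p \<partial>M) / \<kappa> ^ p"
proof -
  interpret prob_space M by fact
  have S: "{y::real. \<kappa> < \<bar>y\<bar>} \<in> sets borel"
    by measurable
  have "measure M {\<omega>\<in>space M. \<kappa> < \<bar>X \<omega>\<bar>} = measure (distr M borel X) {y. \<kappa> < \<bar>y\<bar>}"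
    using measure_distr[OF X S] by (simp add: vimage_def Int_def conj_commute)
  also have "\<dots> = measure (distr M borel Y) {y. \<kappa> < \<bar>y\<bar>}"
    using assms(4) by simp
  also have "\<dots> = measure M {\<omega>\<in>space M. \<kappa> < \<bar>Y \<omega>\<bar>}"
    using measure_distr[OF Y S] by (simp add: vimage_def Int_def conj_commute)
  also have "\<dots> \<le> measure M {\<omega>\<in>space M. \<kappa> ^ p \<le> \<bar>Y \<omega>\<bar> ^ p}"
    using \<open>\<kappa> > 0\<close> Y by (intro finite_measure_mono) (auto intro: power_mono)
  also have "\<dots> \<le> (\<integral>\<omega>. \<bar>Y \<omega>\<bar> ^ p \<partial>M) / \<kappa> ^ p"
    using \<open>\<kappa> > 0\<close> by (intro integral_Markov_inequality_measure[OF assms(5), where A = "space M"]) auto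
  finally show ?thesis .
qed

lemma prob_all_abs_le:
  assumes "prob_space M" "finite I"
    and X: "\<And>i. i \<in> I \<Longrightarrow> X i \<in> borel_measurable M"
    and "\<And>i. i \<in> I \<Longrightarrow> distr M borel (X i) = distr M borel Y" "Y \<in> borel_measurable M"
    and "integrable M (\<lambda>\<omega>. \<bar>Y \<omega>\<bar> ^ p)" "(\<kappa>::real) > 0"
  shows "\<exists>A\<in>sets M. 1 - card I * (\<integral>\<omega>. \<bar>Y \<omega>\<bar> ^ p \<partial>M) / \<kappa> ^ p \<le> measure M A
                   \<and> (\<forall>\<omega>\<in>A. \<forall>i\<in>I. \<bar>X i \<omega>\<bar> \<le> \<kappa>)"
proof -
  interpret prob_space M by fact
  define Bad where "Bad = (\<Union>i\<in>I. {\<omega>\<in>space M. \<kappa> < \<bar>X i \<omega>\<bar>})"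
  have tail_sets: "{\<omega>\<in>space M. \<kappa> < \<bar>X i \<omega>\<bar>} \<in> sets M" if "i \<in> I" for i
    using X[OF that] by measurable
  then have "Bad \<in> sets M"
    unfolding Bad_def using \<open>finite I\<close> by blast
  have "measure M Bad \<le> (\<Sum>i\<in>I. measure M {\<omega>\<in>space M. \<kappa> < \<bar>X i \<omega>\<bar>})"
    unfolding Bad_def using tail_sets \<open>finite I\<close> by (intro finite_measure_subadditive_finite) auto
  also have "\<dots> \<le> (\<Sum>i\<in>I. (\<integral>\<omega>. \<bar>Y \<omega>\<bar> ^ p \<partial>M) / \<kappa> ^ p)"
    using assms by (intro sum_mono measure_abs_gt_le_moment) auto
  finally have "measure M Bad \<le> card I * (\<integral>\<omega>. \<bar>Y \<omega>\<bar> ^ p \<partial>M) / \<kappa> ^ p"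
    by simp
  then show ?thesis
    using \<open>Bad \<in> sets M\<close> prob_compl[OF \<open>Bad \<in> sets M\<close>]
    by (intro bexI[of _ "space M - Bad"]) (auto simp: Bad_def not_less)
qed

lemma prob_case_sum_bounded_property:
  assumes "prob_space M"
    and "\<And>j. case_sum X0 X1 j \<in> borel_measurable M"
    and "\<And>j. distr M borel (case_sum X0 X1 j) = distr M borel Y" "Y \<in> borel_measurable M"
    and "integrable M (\<lambda>\<omega>. \<bar>Y \<omega>\<bar> ^ p)" "(\<kappa>::real) > 0"
    and "2 * real m * (\<integral>\<omega>. \<bar>Y \<omega>\<bar> ^ p \<partial>M) / \<kappa> ^ p \<le> \<delta>"
    and Q: "\<forall>V0 V1. (\<forall>i<m. \<bar>V0 i\<bar> \<le> \<kappa> \<and> \<bar>V1 i\<bar> \<le> \<kappa>) \<longrightarrow> Q V0 V1"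
  shows "\<exists>A\<in>sets M. 1 - \<delta> \<le> measure M A \<and> (\<forall>\<omega>\<in>A. Q (\<lambda>i. X0 i \<omega>) (\<lambda>i. X1 i \<omega>))"
proof -
  let ?I = "Inl ` {..<m} \<union> Inr ` {..<m}"
  obtain A where "A \<in> sets M"
    and A: "1 - card ?I * (\<integral>\<omega>. \<bar>Y \<omega>\<bar> ^ p \<partial>M) / \<kappa> ^ p \<le> measure M A"
    and bounded: "\<forall>\<omega>\<in>A. \<forall>j\<in>?I. \<bar>case_sum X0 X1 j \<omega>\<bar> \<le> \<kappa>"
    using prob_all_abs_le[of M ?I "case_sum X0 X1" Y p \<kappa>] assms(1-6) by blast
  have "card ?I = 2 * m"
    by (subst card_Un_disjoint) (auto simp: card_image)
  then have "card ?I * (\<integral>\<omega>. \<bar>Y \<omega>\<bar> ^ p \<partial>M) / \<kappa> ^ p \<le> \<delta>"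
    using assms(7) by simp
  then have "1 - \<delta> \<le> measure M A"
    using A by linarith
  moreover have "Q (\<lambda>i. X0 i \<omega>) (\<lambda>i. X1 i \<omega>)" if "\<omega> \<in> A" for \<omega>
  proof -
    have "\<forall>i<m. \<bar>X0 i \<omega>\<bar> \<le> \<kappa> \<and> \<bar>X1 i \<omega>\<bar> \<le> \<kappa>"
      using bspec[OF bounded that] unfolding ball_Un by (auto dest!: ball_imageD)
    then show ?thesis
      by (rule Q[THEN spec, THEN spec, THEN mp])
  qed
  ultimately show ?thesis
    using \<open>A \<in> sets M\<close> by blast
qed

section \<open>Choice of the radius\<close>

definition width_scale :: "nat \<Rightarrow> nat \<Rightarrow> real" where
  "width_scale D m = (real m + 1) powr (1 / (2 * (real D + 1)))"

lemma width_scale_ge_one: "1 \<le> width_scale D m"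
  unfolding width_scale_def by (simp add: ge_one_powr_ge_zero)

lemma filterlim_width_scale: "filterlim (width_scale D) at_top sequentially"
  unfolding width_scale_def by real_asymp

lemma width_scale_power: "width_scale D m ^ j = (real m + 1) powr (real j / (2 * (real D + 1)))"
  unfolding width_scale_def by (simp add: powr_power)

lemma width_scale_power_moment: "width_scale D m ^ (2 * (D + 1)) = real m + 1"
proof -
  have "real (2 * (D + 1)) / (2 * (real D + 1)) = 1"
    by simp
  then show ?thesis
    unfolding width_scale_power by (metis add_nonneg_nonneg of_nat_0_le_iff powr_one zero_le_one)
qed

lemma width_scale_power_sqrt: "width_scale D m ^ (D + 1) = sqrt (real m + 1)"
proof -
  have "real (D + 1) / (2 * (real D + 1)) = 1 / 2"
    by simp
  then show ?thesis
    unfolding width_scale_power by (metis add_nonneg_nonneg of_nat_0_le_iff powr_half_sqrt zero_le_one)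
qed

lemma union_bound_width_scale:
  assumes "c \<ge> 1" "E \<ge> 0"
  shows "2 * real m * E / (c * width_scale D m) ^ (2 * (D + 1)) \<le> 2 * E / c"
proof -
  let ?X = "(c * width_scale D m) ^ (2 * (D + 1))"
  have "c \<le> c ^ (2 * (D + 1))"
    using power_increasing[of 1 "2 * (D + 1)" c] assms(1) by simp
  then have X: "c * (real m + 1) \<le> ?X"
    unfolding power_mult_distrib width_scale_power_moment by (simp add: mult_right_mono)
  have "2 * real m * E \<le> 2 * E / c * (c * (real m + 1))"
    using assms by (simp add: field_simps mult_right_mono)
  also have "\<dots> \<le> 2 * E / c * ?X"
    using X assms by (intro mult_left_mono) auto
  finally have "2 * real m * E \<le> 2 * E / c * ?X" .
  moreover have "0 < ?X"
    using X assms(1) by (smt (verit) mult_pos_pos of_nat_0_le_iff)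
  ultimately show ?thesis
    by (simp add: pos_divide_le_eq)
qed

lemma grad_bound_width_scale:
  fixes G c e :: real
  assumes "G \<ge> 0" "c \<ge> 1" "0 \<le> e" "e \<le> 1"
  shows "G * (1 + c * width_scale D m + width_scale D m * e) ^ D * (width_scale D m * e) / sqrt (real m)
           \<le> G * (2 + c) ^ D * e * sqrt 2"
proof (cases "m = 0")
  case False
  let ?B = "width_scale D m"
  have "?B * e \<le> ?B"
    using width_scale_ge_one[of D m] assms by (simp add: mult_left_le)
  then have "1 + c * ?B + ?B * e \<le> (2 + c) * ?B"
    unfolding distrib_right using width_scale_ge_one[of D m] by linarith
  then have "G * (1 + c * ?B + ?B * e) ^ D * (?B * e) / sqrt (real m)
      \<le> G * ((2 + c) * ?B) ^ D * (?B * e) / sqrt (real m)"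
    using assms width_scale_ge_one[of D m]
    by (intro divide_right_mono mult_right_mono mult_left_mono power_mono) auto
  also have "\<dots> = G * (2 + c) ^ D * e * (?B ^ (D + 1) / sqrt (real m))"
    unfolding power_mult_distrib power_add by (simp add: field_simps)
  also have "\<dots> \<le> G * (2 + c) ^ D * e * sqrt 2"
  proof (rule mult_left_mono)
    show "?B ^ (D + 1) / sqrt (real m) \<le> sqrt 2"
      unfolding width_scale_power_sqrt using False
      by (simp add: real_sqrt_divide[symmetric] divide_le_eq)
  qed (use assms in simp)
  finally show ?thesis .
qed (use assms in simp)

lemma exists_width_scaling:
  fixes G E \<delta> :: real and D :: nat
  assumes "G \<ge> 0" "E \<ge> 0" "\<delta> > 0"
  shows "\<exists>B \<eta> \<kappa>. filterlim B at_top sequentially \<and> (\<forall>m. B m > 0) \<and> (\<forall>\<epsilon>>0. \<eta> \<epsilon> > (0::real)) \<and>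
     (\<forall>m. \<kappa> m > 0 \<and> 2 * real m * E / \<kappa> m ^ (2 * (D + 1)) \<le> \<delta>) \<and>
     (\<forall>m \<epsilon>. \<epsilon> > 0 \<longrightarrow> G * (1 + \<kappa> m + B m * \<eta> \<epsilon>) ^ D * (B m * \<eta> \<epsilon>) / sqrt (real m) \<le> \<epsilon>)"
proof -
  define c where "c = 1 + 2 * E / \<delta>"
  define Q where "Q = (G + 1) * (2 + c) ^ D * sqrt 2"
  define \<eta> where "\<eta> \<epsilon> = min 1 (\<epsilon> / Q)" for \<epsilon>
  have "c \<ge> 1"
    unfolding c_def using assms by simp
  then have "Q > 0"
    unfolding Q_def using assms by simp
  have tail: "2 * real m * E / (c * width_scale D m) ^ (2 * (D + 1)) \<le> \<delta>" for m
  proof -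
    have "2 * E / c \<le> \<delta>"
      using assms \<open>c \<ge> 1\<close> unfolding c_def by (simp add: divide_le_eq field_simps)
    then show ?thesis
      using union_bound_width_scale[OF \<open>c \<ge> 1\<close> \<open>E \<ge> 0\<close>, of m D] by linarith
  qed
  have small: "G * (1 + c * width_scale D m + width_scale D m * \<eta> \<epsilon>) ^ D * (width_scale D m * \<eta> \<epsilon>)
      / sqrt (real m) \<le> \<epsilon>" if "\<epsilon> > 0" for m \<epsilon>
  proof -
    have "0 < \<eta> \<epsilon>" "\<eta> \<epsilon> \<le> 1" "Q * \<eta> \<epsilon> \<le> \<epsilon>"
      unfolding \<eta>_def using that \<open>Q > 0\<close> by (auto simp: min_def pos_le_divide_eq mult.commute)
    moreover have "G * (2 + c) ^ D * \<eta> \<epsilon> * sqrt 2 \<le> Q * \<eta> \<epsilon>"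
      unfolding Q_def using assms \<open>c \<ge> 1\<close> \<open>0 < \<eta> \<epsilon>\<close> by (simp add: mult_right_mono)
    ultimately show ?thesis
      using grad_bound_width_scale[OF \<open>G \<ge> 0\<close> \<open>c \<ge> 1\<close>, of "\<eta> \<epsilon>" D m] by linarith
  qed
  have "\<eta> \<epsilon> > 0" if "\<epsilon> > 0" for \<epsilon>
    unfolding \<eta>_def using that \<open>Q > 0\<close> by simp
  moreover have "0 < width_scale D m" "0 < c * width_scale D m" for m
    using width_scale_ge_one[of D m] \<open>c \<ge> 1\<close> by auto
  ultimately show ?thesis
    using filterlim_width_scale tail small
    by (intro exI[of _ "width_scale D"] exI[of _ \<eta>] exI[of _ "\<lambda>m. c * width_scale D m"]) auto
qed

lemma exists_radius_grad_dist_le: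
  fixes E :: "nat \<Rightarrow> real"
  assumes "activation_assm (k + 2) \<sigma>" "1 \<le> k" "bounded T" "\<delta> > 0" "\<And>p. E p \<ge> 0"
  shows "\<exists>p B \<eta> \<kappa>. filterlim B at_top sequentially \<and> (\<forall>m. B m > 0) \<and> (\<forall>\<epsilon>>0. \<eta> \<epsilon> > (0::real)) \<and>
     (\<forall>m. \<kappa> m > 0 \<and> 2 * real m * E p / \<kappa> m ^ p \<le> \<delta>) \<and>
     (\<forall>m V0 V1. (\<forall>i<m. \<bar>V0 i\<bar> \<le> \<kappa> m \<and> \<bar>V1 i\<bar> \<le> \<kappa> m) \<longrightarrow>
        (\<forall>\<epsilon>>0. \<forall>W0 W1. l2dist m W0 V0 \<le> B m * \<eta> \<epsilon> \<and> l2dist m W1 V1 \<le> B m * \<eta> \<epsilon>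
           \<longrightarrow> (\<forall>x\<in>T. grad_dist m \<sigma> k W0 W1 V0 V1 x \<le> \<epsilon>)))"
proof -
  obtain G D where "G \<ge> 0" and grad: "\<forall>m K R V0 V1 W0 W1 x. K \<ge> 0 \<longrightarrow> R \<ge> 0 \<longrightarrow>
      (\<forall>i<m. \<bar>V0 i\<bar> \<le> K \<and> \<bar>V1 i\<bar> \<le> K) \<longrightarrow>
      l2dist m W0 V0 \<le> R \<longrightarrow> l2dist m W1 V1 \<le> R \<longrightarrow> x \<in> T \<longrightarrow>
      grad_dist m \<sigma> k W0 W1 V0 V1 x \<le> G * (1 + K + R) ^ D * R / sqrt (real m)"
    using activation_grad_dist_bound[OF assms(1-3)] by blast
  obtain B \<eta> \<kappa> where B: "filterlim B at_top sequentially" "\<forall>m. B m > 0"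
    and \<eta>: "\<forall>\<epsilon>>0. \<eta> \<epsilon> > 0"
    and \<kappa>: "\<forall>m. \<kappa> m > 0 \<and> 2 * real m * E (2 * (D + 1)) / \<kappa> m ^ (2 * (D + 1)) \<le> \<delta>"
    and small: "\<forall>m \<epsilon>. \<epsilon> > 0 \<longrightarrow> G * (1 + \<kappa> m + B m * \<eta> \<epsilon>) ^ D * (B m * \<eta> \<epsilon>) / sqrt (real m) \<le> \<epsilon>"
    using exists_width_scaling[OF \<open>G \<ge> 0\<close> assms(5)[of "2 * (D + 1)"] \<open>\<delta> > 0\<close>, of D] by blast
  have grad_small: "grad_dist m \<sigma> k W0 W1 V0 V1 x \<le> \<epsilon>"
    if "\<forall>i<m. \<bar>V0 i\<bar> \<le> \<kappa> m \<and> \<bar>V1 i\<bar> \<le> \<kappa> m" "\<epsilon> > 0"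
      "l2dist m W0 V0 \<le> B m * \<eta> \<epsilon>" "l2dist m W1 V1 \<le> B m * \<eta> \<epsilon>" "x \<in> T" for m V0 V1 \<epsilon> W0 W1 x
  proof -
    have "\<kappa> m \<ge> 0" "B m * \<eta> \<epsilon> \<ge> 0"
      using \<kappa> B(2) \<eta> \<open>\<epsilon> > 0\<close> by (auto simp: less_imp_le)
    then have "grad_dist m \<sigma> k W0 W1 V0 V1 x \<le> G * (1 + \<kappa> m + B m * \<eta> \<epsilon>) ^ D * (B m * \<eta> \<epsilon>) / sqrt (real m)"
      using grad that(1,3-5) by simp
    also have "\<dots> \<le> \<epsilon>"
      using small \<open>\<epsilon> > 0\<close> by simp
    finally show ?thesis .
  qed
  show ?thesis
    by (rule exI[of _ "2 * (D + 1)"], rule exI[of _ B], rule exI[of _ \<eta>], rule exI[of _ \<kappa>])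
       (use B \<eta> \<kappa> grad_small in auto)
qed

theorem lemma6:
  fixes M :: "'a measure" and X0 X1 :: "nat \<Rightarrow> 'a \<Rightarrow> real"
    and T :: "real set" and k :: nat and \<sigma> :: "real \<Rightarrow> real"
  assumes "prob_space M"
    and "prob_space.indep_vars M (\<lambda>_. borel) (case_sum X0 X1) UNIV"
    and "\<And>i. distr M borel (X0 i) = distr M borel (X0 0)"
    and "\<And>i. distr M borel (X1 i) = distr M borel (X0 0)"
    and "\<And>p::nat. integrable M (\<lambda>\<omega>. \<bar>X0 0 \<omega>\<bar> ^ p)"
    and "integral\<^sup>L M (X0 0) = 0"
    and "integral\<^sup>L M (\<lambda>\<omega>. (X0 0 \<omega>)\<^sup>2) = 1"
    and "convex T" and "compact T"
    and "k \<ge> 1"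
    and "activation_assm (k + 2) \<sigma>"
  shows "\<forall>\<delta>>0. \<exists>B \<eta>. filterlim B at_top sequentially \<and> (\<forall>m. B m > 0) \<and> (\<forall>\<epsilon>>0. \<eta> \<epsilon> > (0::real)) \<and>
     (\<forall>m. \<exists>A\<in>sets M. measure M A \<ge> 1 - \<delta> \<and>
        (\<forall>\<omega>\<in>A. \<forall>\<epsilon>>0. \<forall>W0 W1.
           l2dist m W0 (\<lambda>i. X0 i \<omega>) \<le> B m * \<eta> \<epsilon> \<and> l2dist m W1 (\<lambda>i. X1 i \<omega>) \<le> B m * \<eta> \<epsilon>
           \<longrightarrow> (\<forall>x\<in>T. grad_dist m \<sigma> k W0 W1 (\<lambda>i. X0 i \<omega>) (\<lambda>i. X1 i \<omega>) x \<le> \<epsilon>)))"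
proof (intro allI impI)
  fix \<delta> :: real
  assume "\<delta> > 0"
  have X_meas: "case_sum X0 X1 j \<in> borel_measurable M" for j
    using assms(2) unfolding prob_space.indep_vars_def2[OF assms(1)] by auto
  have X_distr: "distr M borel (case_sum X0 X1 j) = distr M borel (X0 0)" for j
    using assms(3,4) by (cases j) auto
  obtain p B \<eta> \<kappa> where "filterlim B at_top sequentially" "\<forall>m. B m > 0" "\<forall>\<epsilon>>0. \<eta> \<epsilon> > 0"
    and \<kappa>: "\<forall>m. \<kappa> m > 0 \<and> 2 * real m * (\<integral>\<omega>. \<bar>X0 0 \<omega>\<bar> ^ p \<partial>M) / \<kappa> m ^ p \<le> \<delta>"
    and small: "\<forall>m V0 V1. (\<forall>i<m. \<bar>V0 i\<bar> \<le> \<kappa> m \<and> \<bar>V1 i\<bar> \<le> \<kappa> m) \<longrightarrow>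
        (\<forall>\<epsilon>>0. \<forall>W0 W1. l2dist m W0 V0 \<le> B m * \<eta> \<epsilon> \<and> l2dist m W1 V1 \<le> B m * \<eta> \<epsilon>
           \<longrightarrow> (\<forall>x\<in>T. grad_dist m \<sigma> k W0 W1 V0 V1 x \<le> \<epsilon>))"
    using exists_radius_grad_dist_le[OF assms(11,10) compact_imp_bounded[OF assms(9)] \<open>\<delta> > 0\<close>,
        of "\<lambda>p. \<integral>\<omega>. \<bar>X0 0 \<omega>\<bar> ^ p \<partial>M"] by auto
  moreover have "\<exists>A\<in>sets M. 1 - \<delta> \<le> measure M A \<and> (\<forall>\<omega>\<in>A. \<forall>\<epsilon>>0. \<forall>W0 W1.
           l2dist m W0 (\<lambda>i. X0 i \<omega>) \<le> B m * \<eta> \<epsilon> \<and> l2dist m W1 (\<lambda>i. X1 i \<omega>) \<le> B m * \<eta> \<epsilon>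
           \<longrightarrow> (\<forall>x\<in>T. grad_dist m \<sigma> k W0 W1 (\<lambda>i. X0 i \<omega>) (\<lambda>i. X1 i \<omega>) x \<le> \<epsilon>))" for m
    using \<kappa> by (intro prob_case_sum_bounded_property[OF assms(1) X_meas X_distr X_meas[of "Inl 0", simplified] assms(5) _ _ spec[OF small]])
       auto
  ultimately show "\<exists>B \<eta>. filterlim B at_top sequentially \<and> (\<forall>m. B m > 0) \<and> (\<forall>\<epsilon>>0. \<eta> \<epsilon> > (0::real)) \<and>
     (\<forall>m. \<exists>A\<in>sets M. measure M A \<ge> 1 - \<delta> \<and>
        (\<forall>\<omega>\<in>A. \<forall>\<epsilon>>0. \<forall>W0 W1.
           l2dist m W0 (\<lambda>i. X0 i \<omega>) \<le> B m * \<eta> \<epsilon> \<and> l2dist m W1 (\<lambda>i. X1 i \<omega>) \<le> B m * \<eta> \<epsilon>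
           \<longrightarrow> (\<forall>x\<in>T. grad_dist m \<sigma> k W0 W1 (\<lambda>i. X0 i \<omega>) (\<lambda>i. X1 i \<omega>) x \<le> \<epsilon>)))"
    by blast
qed

end
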